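(* Let $k\ge2$, $\exp_k(x)=\sum_{T\in\mathbb P}\alpha_Tx^T$, and $\lambda\in\mathbb C$. Then the expansion of $\exp_k(x)$ around $\lambda$ is $e^{\lambda}\exp_k(x-\lambda)$; that is, for every $T\in\mathbb P$, $$\sum_{U\in\mathbb P}\alpha_U\,(U/T)\,\lambda^{\deg(U)-\deg(T)}=e^{\lambda}\alpha_T .$$ (Informally: $\exp_k(\lambda+x)=e^\lambda\exp_k(x)$.)
   Context: Let $\mathbb P$ denote the set of finite planar reduced rooted trees (children of each vertex linearly ordered, no vertex with exactly one child), including the empty tree $\mathbf 1$ and the one-vertex tree $|$; $\deg(T)$ is the number of leaves, $L(T)$ the set of leaves. The algebra $\mathbb C\{x\}_{\mathbb P}$ has basis $\{x^T\}$, $x^{\mathbf 1}=1$, $x^|=x$, with $k$-linear operations $\omega_k$ ($k\ge2$), $\omega_k(x^{T_1},\dots,x^{T_k})=x^T$ where $T$ is obtained by attaching the nonempty $T_i$ in order as subtrees of the children of a new root (if exactly one is nonempty, $T$ is that one; if none, $T=\mathbf 1$). $\mathbb C\{\{x\}\}_{\mathbb P}$ is the algebra of formal series $\sum_T\gamma_Tx^T$. For $f=\sum\gamma_Tx^T$ and $c\in\mathbb C$, $f(cx)=\sum\gamma_Tc^{\deg T}x^T$. The $k$-ary exponential series $\exp_k(x)$ is the unique $f\in\mathbb C\{\{x\}\}_{\mathbb P}$ with $f=1+x+(\text{terms of degree}\ge2)$ and $\omega_k(f,\dots,f)=f(kx)$; it has infinite radius of convergence. Contraction $S|I$ for $I\subseteq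 L(S)$: the tree obtained from the subtree of $S$ spanned by the root-to-leaf paths to leaves in $I$ by suppressing all vertices with exactly one child; planar binomial coefficient $(S/T)=\#\{I\subseteq L(S):S|I=T\}$. The expansion of $f=\sum_U\gamma_Ux^U$ around $\lambda$ is $\sum_T\big(\sum_U\gamma_U(U/T)\lambda^{\deg U-\deg T}\big)(x-\lambda)^T$. *)

theory Defs
  imports "HOL-Analysis.Analysis"
begin

text \<open>A tree in the set P is an element of type rtree option, where None is the empty tree 1
  and Some Lf is the one-vertex tree.\<close>

datatype rtree = Lf | Nd "rtree list"

primrec reduced :: "rtree \<Rightarrow> bool" where
  "reduced Lf = True"
| "reduced (Nd ts) = (2 \<le> length ts \<and> list_all reduced ts)"

definition inP :: "rtree option \<Rightarrow> bool" where
  "inP T = (case T of None \<Rightarrow> True | Some t \<Rightarrow> reduced t)"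

primrec tdeg :: "rtree \<Rightarrow> nat" where
  "tdeg Lf = 1"
| "tdeg (Nd ts) = sum_list (map tdeg ts)"

definition pdeg :: "rtree option \<Rightarrow> nat" where
  "pdeg T = (case T of None \<Rightarrow> 0 | Some t \<Rightarrow> tdeg t)"

definition graft :: "rtree option list \<Rightarrow> rtree option" where
  "graft xs = (let ys = map the (filter (\<lambda>x. x \<noteq> None) xs) in
     if ys = [] then None else if length ys = 1 then Some (hd ys) else Some (Nd ys))"

text \<open>Formal series: coefficient functions P \<Rightarrow> C.  The k-linear operation omega_k
  extended to series: coefficient at T.\<close>
definition omega_coeff :: "nat \<Rightarrow> (rtree option \<Rightarrow> complex) list \<Rightarrow> rtree option \<Rightarrow> complex" where
  "omega_coeff k fs T =
     (\<Sum>ts \<in> {ts. length ts = k \<and> list_all inP ts \<and> graft ts = T}.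
        \<Prod>i<k. (fs ! i) (ts ! i))"

text \<open>f is the k-ary exponential series: f = 1 + x + (degree \<ge> 2 terms),
  omega_k(f,...,f) = f(kx); coefficients vanish outside P.\<close>
definition is_exp_series :: "nat \<Rightarrow> (rtree option \<Rightarrow> complex) \<Rightarrow> bool" where
  "is_exp_series k f =
     ((\<forall>T. \<not> inP T \<longrightarrow> f T = 0) \<and> f None = 1 \<and> f (Some Lf) = 1 \<and>
      (\<forall>T. inP T \<longrightarrow> omega_coeff k (replicate k f) T = of_nat k ^ pdeg T * f T))"

definition exp_k :: "nat \<Rightarrow> rtree option \<Rightarrow> complex" where
  "exp_k k = (THE f. is_exp_series k f)"

text \<open>Contraction S|I; leaves are numbered 0,1,... from left to right.\<close>
fun contract :: "rtree \<Rightarrow> nat set \<Rightarrow> rtree option"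
and contract_list :: "rtree list \<Rightarrow> nat set \<Rightarrow> rtree option list" where
  "contract Lf I = (if 0 \<in> I then Some Lf else None)"
| "contract (Nd ts) I = graft (contract_list ts I)"
| "contract_list [] I = []"
| "contract_list (t # ts) I = contract t I # contract_list ts {i. i + tdeg t \<in> I}"

definition pcontract :: "rtree option \<Rightarrow> nat set \<Rightarrow> rtree option" where
  "pcontract S I = (case S of None \<Rightarrow> None | Some s \<Rightarrow> contract s I)"

definition pbinom :: "rtree option \<Rightarrow> rtree option \<Rightarrow> nat" where
  "pbinom S T = card {I. I \<subseteq> {..<pdeg S} \<and> pcontract S I = T}"

end

theory Submission
  imports Defs
begin

(*
  Let W_n(T) be the coefficient of lam^n x^T in exp_k(lam + x), i.e. the sum of alpha_U over
  the pairs (U, I) with deg U = deg T + n and U|I = T. We show W_n(T) = alpha_T / n!; summing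
  over n then gives e^lam alpha_T, absolutely convergent because the alpha_U are nonnegative.

  Contraction commutes with grafting: contracting omega_k(u_1, ..., u_k) to a leaf set I
  contracts each u_i to its share of I. Expanding alpha_U by the functional equation in
  k^(deg T + n) W_n(T) therefore gives the recursion
    k^(deg T + n) W_n(T) = sum over (t_1, ..., t_k) grafting to T and n_1 + ... + n_k = n
                           of prod_i W_(n_i)(t_i),
  which alpha_T / n! satisfies as well, by the multinomial theorem. Only the k diagonal terms
  (1, ..., T, ..., 1), (0, ..., n, ..., 0) involve (n, T) itself and k^N <> k for N >= 2, so the
  recursion and the values at n = 0 and at (n, T) = (1, 1) determine W.
*)

lemma sum_list_dominant_entry:
  fixes ns :: "nat list"
  assumes j: "j < length ns" and dom: "sum_list ns \<le> ns!j"
  shows "ns = (replicate (length ns) 0)[j := sum_list ns]"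
proof (rule nth_equalityI)
  fix i assume i: "i < length ns"
  have sum: "sum_list ns = (\<Sum>i<length ns. ns!i)" by (simp add: sum_list_sum_nth atLeast0LessThan)
  have "ns!j = sum_list ns" using dom elem_le_sum_list[OF j] by simp
  moreover have "ns!i = 0" if "i \<noteq> j"
  proof -
    have "(\<Sum>i\<in>{i,j}. ns!i) \<le> sum_list ns"
      unfolding sum by (rule sum_mono2) (use i j in auto)
    then show ?thesis using dom that by simp
  qed
  ultimately show "ns!i = (replicate (length ns) 0)[j := sum_list ns] ! i"
    using i by (cases "i = j") auto
qed simp

lemma prod_lessThan_single:
  fixes h :: "nat \<Rightarrow> 'a::comm_monoid_mult"
  assumes "j < k" and "\<And>i. i < k \<Longrightarrow> i \<noteq> j \<Longrightarrow> h i = 1"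
  shows "(\<Prod>i<k. h i) = h j"
proof -
  have "(\<Prod>i<k. h i) = h j * (\<Prod>i\<in>{..<k} - {j}. h i)"
    using assms(1) by (subst prod.remove[of _ j]) auto
  also have "(\<Prod>i\<in>{..<k} - {j}. h i) = 1" using assms(2) by (intro prod.neutral) auto
  finally show ?thesis by simp
qed

lemma prod_sum_eq_sum_lists:
  fixes f :: "nat \<Rightarrow> 'b \<Rightarrow> 'a::comm_semiring_1"
  shows "(\<Prod>i<k. \<Sum>x\<in>A i. f i x) = (\<Sum>xs | length xs = k \<and> (\<forall>i<k. xs!i \<in> A i). \<Prod>i<k. f i (xs!i))"
proof (induction k arbitrary: A f)
  case 0
  have "{xs. length xs = 0 \<and> (\<forall>i<0. xs!i \<in> A i)} = {[]}" by auto
  then show ?case by simp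
next
  case (Suc k)
  let ?S = "{xs. length xs = k \<and> (\<forall>i<k. xs!i \<in> A (Suc i))}"
  have inj: "inj_on (\<lambda>(x, xs). x # xs) (A 0 \<times> ?S)" by (auto simp: inj_on_def)
  have lists: "{xs. length xs = Suc k \<and> (\<forall>i<Suc k. xs!i \<in> A i)} = (\<lambda>(x, xs). x # xs) ` (A 0 \<times> ?S)"
  proof
    show "{xs. length xs = Suc k \<and> (\<forall>i<Suc k. xs!i \<in> A i)} \<subseteq> (\<lambda>(x, xs). x # xs) ` (A 0 \<times> ?S)"
    proof
      fix xs assume xs: "xs \<in> {xs. length xs = Suc k \<and> (\<forall>i<Suc k. xs!i \<in> A i)}"
      then obtain y ys where "xs = y # ys" by (cases xs) auto
      with xs show "xs \<in> (\<lambda>(x, xs). x # xs) ` (A 0 \<times> ?S)" by force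
    qed
  qed (auto simp: less_Suc_eq_0_disj)
  have "(\<Prod>i<Suc k. \<Sum>x\<in>A i. f i x) = (\<Sum>x\<in>A 0. f 0 x) * (\<Prod>i<k. \<Sum>x\<in>A (Suc i). f (Suc i) x)"
    by (simp del: prod.lessThan_Suc add: prod.lessThan_Suc_shift)
  also have "\<dots> = (\<Sum>x\<in>A 0. f 0 x) * (\<Sum>xs\<in>?S. \<Prod>i<k. f (Suc i) (xs!i))"
    using Suc[where A = "\<lambda>i. A (Suc i)" and f = "\<lambda>i. f (Suc i)"] by simp
  also have "\<dots> = (\<Sum>(x, xs)\<in>A 0 \<times> ?S. \<Prod>i<Suc k. f i ((x # xs)!i))"
    by (simp del: prod.lessThan_Suc add: prod.lessThan_Suc_shift sum_product sum.cartesian_product)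
  also have "\<dots> = (\<Sum>ys\<in>(\<lambda>(x, xs). x # xs) ` (A 0 \<times> ?S). \<Prod>i<Suc k. f i (ys!i))"
    by (subst sum.reindex[OF inj]) (simp add: case_prod_beta)
  finally show ?case by (simp only: lists)
qed

lemma finite_lists_nth_in:
  assumes "\<And>i. i < k \<Longrightarrow> finite (A i)"
  shows "finite {xs. length xs = k \<and> (\<forall>i<k. xs!i \<in> A i)}"
proof (rule finite_subset)
  show "{xs. length xs = k \<and> (\<forall>i<k. xs!i \<in> A i)} \<subseteq> {xs. set xs \<subseteq> (\<Union>i<k. A i) \<and> length xs = k}"
    by (force simp: in_set_conv_nth)
qed (use assms in \<open>auto intro: finite_lists_length_eq\<close>)

lemma less_power_self: "2 \<le> k \<Longrightarrow> 2 \<le> d \<Longrightarrow> (k::nat) < k ^ d"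
  using power_strict_increasing[of 1 d k] by simp

lemma of_nat_power_minus_self_neq_0:
  "2 \<le> k \<Longrightarrow> 2 \<le> d \<Longrightarrow> (of_nat k ^ d - of_nat k :: 'a::{ring_1, ring_char_0}) \<noteq> 0"
  using less_power_self[of k d] by (metis less_irrefl of_nat_eq_iff of_nat_power right_minus_eq)

lemma Int_lessThan_add_eq:
  "I \<inter> {..<(a::nat) + b} = (I \<inter> {..<a}) \<union> (\<lambda>x. x + a) ` ({x. x + a \<in> I} \<inter> {..<b})"
proof
  show "I \<inter> {..<a + b} \<subseteq> (I \<inter> {..<a}) \<union> (\<lambda>x. x + a) ` ({x. x + a \<in> I} \<inter> {..<b})"
  proof
    fix x assume "x \<in> I \<inter> {..<a + b}"
    then show "x \<in> (I \<inter> {..<a}) \<union> (\<lambda>x. x + a) ` ({x. x + a \<in> I} \<inter> {..<b})"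
      by (cases "x < a") (auto intro!: image_eqI[where x = "x - a"])
  qed
qed auto

lemma card_Int_lessThan_add:
  "card (I \<inter> {..<(a::nat) + b}) = card (I \<inter> {..<a}) + card ({x. x + a \<in> I} \<inter> {..<b})"
proof -
  have "card (I \<inter> {..<a + b}) = card (I \<inter> {..<a}) + card ((\<lambda>x. x + a) ` ({x. x + a \<in> I} \<inter> {..<b}))"
    unfolding Int_lessThan_add_eq by (rule card_Un_disjoint) auto
  also have "card ((\<lambda>x. x + a) ` ({x. x + a \<in> I} \<inter> {..<b})) = card ({x. x + a \<in> I} \<inter> {..<b})"
    by (rule card_image) (auto simp: inj_on_def)
  finally show ?thesis .
qed

lemma has_sum_exp_shifted:
  fixes z c :: "'a::{real_normed_field,banach}"
  shows "((\<lambda>N. if d \<le> N then c / fact (N - d) * z ^ (N - d) else 0) has_sum c * exp z) UNIV"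
proof -
  define G where "G = (\<lambda>N. if d \<le> N then c / fact (N - d) * z ^ (N - d) else 0)"
  have "((\<lambda>n. z ^ n /\<^sub>R fact n) has_sum exp z) UNIV"
    by (rule norm_summable_imp_has_sum[OF summable_norm_exp exp_converges])
  then have "((\<lambda>n. c * (z ^ n /\<^sub>R fact n)) has_sum c * exp z) UNIV"
    by (rule has_sum_cmult_right)
  then have "(G has_sum c * exp z) ((\<lambda>n. n + d) ` UNIV)"
    by (subst has_sum_reindex) (auto simp: G_def o_def inj_on_def scaleR_conv_of_real field_simps)
  also have "?this \<longleftrightarrow> (G has_sum c * exp z) UNIV"
  proof (rule has_sum_cong_neutral)
    fix x assume "x \<in> UNIV - (\<lambda>n. n + d) ` UNIV"
    then have "x < d" by (metis Diff_iff UNIV_I image_eqI le_add_diff_inverse2 not_less add.commute)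
    then show "G x = 0" by (simp add: G_def)
  qed auto
  finally show ?thesis by (simp add: G_def)
qed

lemma has_sum_Union_disjoint_abs:
  fixes f :: "'a \<Rightarrow> 'b::banach"
  assumes f: "\<And>i. i \<in> I \<Longrightarrow> (f has_sum g i) (B i)"
    and norm_f: "\<And>i. i \<in> I \<Longrightarrow> ((\<lambda>x. norm (f x)) has_sum h i) (B i)"
    and h: "h summable_on I" and g: "(g has_sum s) I" and disj: "disjoint_family_on B I"
  shows "(f has_sum s) (\<Union>i\<in>I. B i)"
proof -
  have inj: "inj_on snd (Sigma I B)"
    using disj by (intro inj_onI) (force simp: disjoint_family_on_def)
  have "(\<lambda>x. norm (f x)) summable_on (\<Union>i\<in>I. B i)"
    by (intro summable_on_UnionI[OF norm_f h _ disj] norm_ge_zero)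
  then have "f summable_on snd ` Sigma I B"
    by (simp add: snd_image_Sigma abs_summable_summable)
  then have "((f \<circ> snd) has_sum s) (Sigma I B)"
    by (intro has_sum_SigmaI[OF _ g]) (simp_all add: f summable_on_reindex[OF inj, symmetric])
  then show ?thesis
    by (simp add: has_sum_reindex[OF inj, symmetric] snd_image_Sigma)
qed

section \<open>Degrees and grafting\<close>

lemma reduced_tdeg_pos: "reduced t \<Longrightarrow> 1 \<le> tdeg t"
proof (induction t)
  case (Nd ts)
  then obtain t where "t \<in> set ts" "reduced t" by (cases ts) auto
  with Nd.IH have "1 \<le> tdeg t" by simp
  also have "tdeg t \<le> tdeg (Nd ts)"
    using \<open>t \<in> set ts\<close> by (simp add: member_le_sum_list)
  finally show ?case .
qed simp

lemma length_le_sum_tdeg: "list_all reduced ts \<Longrightarrow> length ts \<le> sum_list (map tdeg ts)"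
  by (induction ts) (auto dest: reduced_tdeg_pos)

lemma pdeg_eq_0_iff: "inP T \<Longrightarrow> pdeg T = 0 \<longleftrightarrow> T = None"
  by (cases T) (auto simp: inP_def pdeg_def dest: reduced_tdeg_pos)

lemma pdeg_eq_1_iff: "inP T \<Longrightarrow> pdeg T = 1 \<longleftrightarrow> T = Some Lf"
proof (cases T)
  case (Some t)
  moreover assume "inP T"
  moreover have "2 \<le> tdeg (Nd ts)" if "reduced (Nd ts)" for ts
    using that length_le_sum_tdeg[of ts] by simp
  ultimately show ?thesis by (cases t) (fastforce simp: inP_def pdeg_def)+
qed (simp add: pdeg_def)

lemma tdeg_child_less: "reduced (Nd ts) \<Longrightarrow> t \<in> set ts \<Longrightarrow> tdeg t < tdeg (Nd ts)"
proof -
  assume r: "reduced (Nd ts)" and t: "t \<in> set ts"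
  have "tdeg (Nd ts) = tdeg t + sum_list (map tdeg (remove1 t ts))"
    using t by (simp add: sum_list_map_remove1)
  moreover have "1 \<le> length (remove1 t ts)" using r t by (simp add: length_remove1) linarith
  moreover have "list_all reduced (remove1 t ts)"
    using r by (simp add: list_all_iff) (meson notin_set_remove1)
  ultimately show ?thesis using length_le_sum_tdeg[of "remove1 t ts"] by simp
qed

lemma finite_reduced_tdeg_le: "finite {t. reduced t \<and> tdeg t \<le> m}"
proof (induction m)
  case 0
  have "{t. reduced t \<and> tdeg t \<le> 0} = {}" using reduced_tdeg_pos by fastforce
  then show ?case by (metis finite.emptyI)
next
  case (Suc m)
  let ?A = "{t. reduced t \<and> tdeg t \<le> m}"
  have "{t. reduced t \<and> tdeg t \<le> Suc m} \<subseteq> insert Lf (Nd ` {ts. set ts \<subseteq> ?A \<and> length ts \<le> Suc m})"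
  proof
    fix t assume "t \<in> {t. reduced t \<and> tdeg t \<le> Suc m}"
    then have r: "reduced t" and d: "tdeg t \<le> Suc m" by auto
    show "t \<in> insert Lf (Nd ` {ts. set ts \<subseteq> ?A \<and> length ts \<le> Suc m})"
    proof (cases t)
      case (Nd ts)
      have "set ts \<subseteq> ?A"
        using tdeg_child_less[of ts] r d Nd by (fastforce simp: list_all_iff)
      moreover have "length ts \<le> Suc m" using length_le_sum_tdeg[of ts] r d Nd by simp
      ultimately show ?thesis using Nd by auto
    qed simp
  qed
  moreover have "finite (insert Lf (Nd ` {ts. set ts \<subseteq> ?A \<and> length ts \<le> Suc m}))"
    using Suc finite_lists_length_le by blast
  ultimately show ?case by (rule finite_subset)
qed

lemma finite_inP_pdeg_le: "finite {U. inP U \<and> pdeg U \<le> m}"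
proof (rule finite_subset)
  show "{U. inP U \<and> pdeg U \<le> m} \<subseteq> insert None (Some ` {t. reduced t \<and> tdeg t \<le> m})"
    by (force simp: inP_def pdeg_def split: option.splits)
qed (simp add: finite_reduced_tdeg_le)

lemma finite_inP_pdeg_eq: "finite {U. inP U \<and> pdeg U = N}"
  by (rule finite_subset[OF _ finite_inP_pdeg_le[of N]]) auto

lemma graft_eq_case:
  "graft xs = (case map the (filter (\<lambda>x. x \<noteq> None) xs) of
     [] \<Rightarrow> None | [t] \<Rightarrow> Some t | ts \<Rightarrow> Some (Nd ts))"
  by (auto simp: graft_def Let_def split: list.split)

lemma pdeg_graft: "pdeg (graft xs) = sum_list (map pdeg xs)"
proof -
  have "sum_list (map pdeg xs) = sum_list (map tdeg (map the (filter (\<lambda>x. x \<noteq> None) xs)))"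
    by (induction xs) (auto simp: pdeg_def)
  then show ?thesis by (auto simp: graft_eq_case pdeg_def split: list.split)
qed

lemma inP_graft: "list_all inP xs \<Longrightarrow> inP (graft xs)"
proof -
  assume "list_all inP xs"
  then have "list_all reduced (map the (filter (\<lambda>x. x \<noteq> None) xs))"
    by (induction xs) (auto simp: inP_def)
  then show ?thesis by (auto simp: graft_eq_case inP_def split: list.split)
qed

lemma graft_single: "graft [x] = x"
  by (cases x) (auto simp: graft_def)

lemma graft_nones_upd: "j < k \<Longrightarrow> graft ((replicate k None)[j := T]) = T"
proof -
  assume "j < k"
  then have "filter (\<lambda>x. x \<noteq> None) ((replicate k None)[j := T]) = filter (\<lambda>x. x \<noteq> None) [T]"
    by (induction k arbitrary: j) (auto split: nat.split)
  then show ?thesis by (metis graft_def graft_single)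
qed

definition graft_tuples :: "nat \<Rightarrow> rtree option \<Rightarrow> rtree option list set" where
  "graft_tuples k T = {ts. length ts = k \<and> list_all inP ts \<and> graft ts = T}"

lemma omega_coeff_replicate:
  "omega_coeff k (replicate k f) T = (\<Sum>ts\<in>graft_tuples k T. \<Prod>i<k. f (ts!i))"
  unfolding omega_coeff_def graft_tuples_def by (intro sum.cong prod.cong refl) auto

lemma sum_list_pdeg_graft_tuples: "ts \<in> graft_tuples k T \<Longrightarrow> sum_list (map pdeg ts) = pdeg T"
  by (auto simp: graft_tuples_def pdeg_graft)

lemma inP_graft_tuples_nth: "ts \<in> graft_tuples k T \<Longrightarrow> i < k \<Longrightarrow> inP (ts!i)"
  by (auto simp: graft_tuples_def list_all_length)

lemma pdeg_graft_tuples_nth_le: "ts \<in> graft_tuples k T \<Longrightarrow> i < k \<Longrightarrow> pdeg (ts!i) \<le> pdeg T"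
  using sum_list_pdeg_graft_tuples[of ts k T] elem_le_sum_list[of i "map pdeg ts"]
  by (auto simp: graft_tuples_def)

lemma finite_graft_tuples: "finite (graft_tuples k T)"
proof (rule finite_subset)
  show "graft_tuples k T \<subseteq> {ts. set ts \<subseteq> {U. inP U \<and> pdeg U \<le> pdeg T} \<and> length ts = k}"
    using pdeg_graft_tuples_nth_le inP_graft_tuples_nth
    by (auto simp: graft_tuples_def in_set_conv_nth)
qed (rule finite_lists_length_eq[OF finite_inP_pdeg_le])

lemma nones_upd_graft_tuples: "inP T \<Longrightarrow> j < k \<Longrightarrow> (replicate k None)[j := T] \<in> graft_tuples k T"
  by (auto simp: graft_tuples_def graft_nones_upd list_all_iff inP_def in_set_conv_nth nth_list_update)

lemma graft_tuples_dominant_entry: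
  assumes ts: "ts \<in> graft_tuples k T" and j: "j < k" and dom: "pdeg T \<le> pdeg (ts!j)"
  shows "ts = (replicate k None)[j := T]"
proof -
  have len: "length ts = k" using ts by (simp add: graft_tuples_def)
  have "map pdeg ts = (replicate (length (map pdeg ts)) 0)[j := sum_list (map pdeg ts)]"
    by (rule sum_list_dominant_entry) (use j dom len sum_list_pdeg_graft_tuples[OF ts] in auto)
  then have "map pdeg ts = (replicate k 0)[j := pdeg T]"
    by (simp only: length_map len sum_list_pdeg_graft_tuples[OF ts])
  then have "pdeg (ts!i) = 0" if "i < k" "i \<noteq> j" for i
    using that len by (metis nth_map nth_list_update_neq nth_replicate length_map)
  then have "ts!i = None" if "i < k" "i \<noteq> j" for i
    using that pdeg_eq_0_iff inP_graft_tuples_nth[OF ts] by blast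
  then have upd: "ts = (replicate k None)[j := ts!j]"
    using len j by (intro nth_equalityI) (auto simp: nth_list_update)
  then have "ts!j = T"
    using ts graft_nones_upd[OF j, of "ts!j"] by (simp add: graft_tuples_def)
  then show ?thesis using upd by simp
qed

lemma graft_tuples_None: "1 \<le> k \<Longrightarrow> graft_tuples k None = {replicate k None}"
proof
  assume k: "1 \<le> k"
  have upd: "(replicate k None)[0 := None] = replicate k None"
    using k by (simp add: list_update_same_conv)
  show "graft_tuples k None \<subseteq> {replicate k None}"
  proof
    fix ts assume "ts \<in> graft_tuples k None"
    then have "ts = (replicate k None)[0 := None]"
      using k by (intro graft_tuples_dominant_entry) (auto simp: pdeg_def)
    then show "ts \<in> {replicate k None}" using upd by simp
  qed
  show "{replicate k None} \<subseteq> graft_tuples k None"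
    using nones_upd_graft_tuples[of None 0 k] k unfolding upd by (simp add: inP_def)
qed

definition proper_graft_tuples :: "nat \<Rightarrow> rtree option \<Rightarrow> rtree option list set" where
  "proper_graft_tuples k T = {ts \<in> graft_tuples k T. \<forall>i<k. pdeg (ts!i) < pdeg T}"

lemma proper_graft_tuples_pdeg_1: "pdeg T = 1 \<Longrightarrow> proper_graft_tuples k T = {}"
proof (rule ccontr)
  assume "pdeg T = 1" "proper_graft_tuples k T \<noteq> {}"
  then obtain ts where ts: "ts \<in> graft_tuples k T" "\<forall>i<k. pdeg (ts!i) = 0"
    by (auto simp: proper_graft_tuples_def)
  then have "sum_list (map pdeg ts) = 0"
    by (auto simp: graft_tuples_def sum_list_eq_0_iff in_set_conv_nth)
  then show False using sum_list_pdeg_graft_tuples[OF ts(1)] \<open>pdeg T = 1\<close> by simp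
qed

lemma sum_graft_tuples_split:
  fixes g :: "rtree option \<Rightarrow> 'a::comm_semiring_1"
  assumes T: "inP T" "1 \<le> pdeg T" and g: "g None = 1"
  shows "(\<Sum>ts\<in>graft_tuples k T. \<Prod>i<k. g (ts!i))
       = (\<Sum>ts\<in>proper_graft_tuples k T. \<Prod>i<k. g (ts!i)) + of_nat k * g T"
proof -
  let ?single = "\<lambda>j. (replicate k None)[j := T]"
  have "T \<noteq> None" using T by (cases T) (auto simp: pdeg_def)
  then have inj: "inj_on ?single {..<k}"
    by (intro inj_onI) (metis lessThan_iff length_replicate nth_list_update_eq nth_list_update_neq nth_replicate)
  have diff: "graft_tuples k T - proper_graft_tuples k T = ?single ` {..<k}"
  proof
    show "graft_tuples k T - proper_graft_tuples k T \<subseteq> ?single ` {..<k}"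
      using graft_tuples_dominant_entry by (force simp: proper_graft_tuples_def not_less)
    show "?single ` {..<k} \<subseteq> graft_tuples k T - proper_graft_tuples k T"
      using nones_upd_graft_tuples[OF T(1)] T(2) by (auto simp: proper_graft_tuples_def)
  qed
  have "(\<Sum>ts\<in>graft_tuples k T. \<Prod>i<k. g (ts!i))
      = (\<Sum>ts\<in>graft_tuples k T - proper_graft_tuples k T. \<Prod>i<k. g (ts!i))
        + (\<Sum>ts\<in>proper_graft_tuples k T. \<Prod>i<k. g (ts!i))"
    by (rule sum.subset_diff) (auto simp: proper_graft_tuples_def finite_graft_tuples)
  also have "(\<Sum>ts\<in>graft_tuples k T - proper_graft_tuples k T. \<Prod>i<k. g (ts!i))
      = (\<Sum>j<k. \<Prod>i<k. g (?single j ! i))"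
    unfolding diff by (simp add: sum.reindex[OF inj])
  also have "(\<Sum>j<k. \<Prod>i<k. g (?single j ! i)) = (\<Sum>j<k. g T)"
  proof (rule sum.cong[OF refl])
    fix j assume "j \<in> {..<k}"
    then show "(\<Prod>i<k. g (?single j ! i)) = g T"
      using g by (subst prod_lessThan_single[of j]) auto
  qed
  finally show ?thesis by (simp add: add.commute)
qed

section \<open>The exponential series\<close>

(* At a tree T of degree at least 2 the functional equation reads
   (k^deg T - k) alpha_T = sum of prod_i alpha(t_i) over the proper graft tuples t,
   because the k tuples (1, ..., T, ..., 1) are the only graft tuples of T with an entry of
   full degree. *)
definition exp_coeff_step :: "nat \<Rightarrow> (rtree option \<Rightarrow> real) \<Rightarrow> rtree option \<Rightarrow> real" where
  "exp_coeff_step k a T = (if \<not> inP T then 0 else if pdeg T \<le> 1 then 1 else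
     (\<Sum>ts\<in>proper_graft_tuples k T. \<Prod>i<k. a (ts!i)) / (real k ^ pdeg T - real k))"

(* The step at T only reads values at trees of smaller degree, so deg T + 1 iterations
   already fix the value at T. *)
definition exp_coeff :: "nat \<Rightarrow> rtree option \<Rightarrow> real" where
  "exp_coeff k T = (exp_coeff_step k ^^ Suc (pdeg T)) (\<lambda>_. 0) T"

lemma exp_coeff_step_cong:
  assumes "\<And>U. inP U \<Longrightarrow> pdeg U < pdeg T \<Longrightarrow> a U = b U"
  shows "exp_coeff_step k a T = exp_coeff_step k b T"
proof -
  have "(\<Sum>ts\<in>proper_graft_tuples k T. \<Prod>i<k. a (ts!i)) = (\<Sum>ts\<in>proper_graft_tuples k T. \<Prod>i<k. b (ts!i))"
    using assms inP_graft_tuples_nth by (intro sum.cong prod.cong refl) (auto simp: proper_graft_tuples_def)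
  then show ?thesis by (simp add: exp_coeff_step_def)
qed

lemma exp_coeff_iterate: "pdeg T < m \<Longrightarrow> (exp_coeff_step k ^^ m) (\<lambda>_. 0) T = exp_coeff k T"
proof (induction m arbitrary: T rule: less_induct)
  case (less m)
  then obtain m' where m: "m = Suc m'" by (cases m) auto
  have "(exp_coeff_step k ^^ m) (\<lambda>_. 0) T = exp_coeff_step k ((exp_coeff_step k ^^ m') (\<lambda>_. 0)) T"
    by (simp add: m)
  also have "\<dots> = exp_coeff_step k (exp_coeff k) T"
    by (rule exp_coeff_step_cong) (use less m in simp)
  also have "\<dots> = exp_coeff_step k ((exp_coeff_step k ^^ pdeg T) (\<lambda>_. 0)) T"
    by (rule exp_coeff_step_cong) (use less in simp)
  also have "\<dots> = exp_coeff k T" by (simp add: exp_coeff_def)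
  finally show ?case .
qed

lemma exp_coeff_rec: "exp_coeff k T = exp_coeff_step k (exp_coeff k) T"
proof -
  have "exp_coeff k T = exp_coeff_step k ((exp_coeff_step k ^^ pdeg T) (\<lambda>_. 0)) T"
    by (simp add: exp_coeff_def)
  also have "\<dots> = exp_coeff_step k (exp_coeff k) T"
    by (rule exp_coeff_step_cong) (simp add: exp_coeff_iterate)
  finally show ?thesis .
qed

lemma exp_coeff_not_inP: "\<not> inP T \<Longrightarrow> exp_coeff k T = 0"
  and exp_coeff_None: "exp_coeff k None = 1"
  and exp_coeff_Lf: "exp_coeff k (Some Lf) = 1"
  by (subst exp_coeff_rec; simp add: exp_coeff_step_def inP_def pdeg_def)+

lemma exp_coeff_nonneg: "2 \<le> k \<Longrightarrow> 0 \<le> exp_coeff k T"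
proof (induction "pdeg T" arbitrary: T rule: less_induct)
  case less
  have "0 \<le> real k ^ pdeg T - real k" if "2 \<le> pdeg T"
    using less_power_self[OF less.prems that] by (metis diff_ge_0_iff_ge less_imp_le of_nat_le_iff of_nat_power)
  moreover have "0 \<le> (\<Sum>ts\<in>proper_graft_tuples k T. \<Prod>i<k. exp_coeff k (ts!i))"
    using less by (intro sum_nonneg prod_nonneg) (auto simp: proper_graft_tuples_def)
  ultimately show ?case by (subst exp_coeff_rec) (simp add: exp_coeff_step_def)
qed

lemma exp_coeff_graft_identity:
  assumes k: "2 \<le> k" and T: "inP T"
  shows "(\<Sum>ts\<in>graft_tuples k T. \<Prod>i<k. exp_coeff k (ts!i)) = real k ^ pdeg T * exp_coeff k T"
proof (cases "pdeg T \<le> 1")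
  case True
  then consider "pdeg T = 0" | "pdeg T = 1" by linarith
  then show ?thesis
  proof cases
    case 1
    then have "T = None" using T pdeg_eq_0_iff by blast
    then show ?thesis using k by (simp add: graft_tuples_None exp_coeff_None pdeg_def)
  next
    case 2
    then show ?thesis
      using sum_graft_tuples_split[of T "exp_coeff k" k] T exp_coeff_None pdeg_eq_1_iff[OF T]
      by (simp add: proper_graft_tuples_pdeg_1 exp_coeff_Lf)
  qed
next
  case False
  have "(\<Sum>ts\<in>proper_graft_tuples k T. \<Prod>i<k. exp_coeff k (ts!i))
      = (real k ^ pdeg T - real k) * exp_coeff k T"
    using False T of_nat_power_minus_self_neq_0[OF k, of "pdeg T", where 'a = real]
    by (subst (2) exp_coeff_rec) (simp add: exp_coeff_step_def)
  then show ?thesis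
    using sum_graft_tuples_split[of T "exp_coeff k" k] T exp_coeff_None False
    by (simp add: algebra_simps)
qed

lemma is_exp_series_exp_coeff:
  assumes k: "2 \<le> k" shows "is_exp_series k (\<lambda>T. of_real (exp_coeff k T))"
proof -
  have "(\<Sum>ts\<in>graft_tuples k T. \<Prod>i<k. complex_of_real (exp_coeff k (ts!i)))
      = of_nat k ^ pdeg T * of_real (exp_coeff k T)" if "inP T" for T
    using arg_cong[OF exp_coeff_graft_identity[OF k that], of complex_of_real] by simp
  then show ?thesis
    by (simp add: is_exp_series_def omega_coeff_replicate exp_coeff_not_inP exp_coeff_None exp_coeff_Lf)
qed

lemma is_exp_series_unique:
  assumes k: "2 \<le> k" and f: "is_exp_series k f" and g: "is_exp_series k g"
  shows "f T = g T"
proof (induction "pdeg T" arbitrary: T rule: less_induct)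
  case less
  have f01: "f None = 1" "f (Some Lf) = 1" and g01: "g None = 1" "g (Some Lf) = 1"
    using f g by (auto simp: is_exp_series_def)
  consider "\<not> inP T" | "inP T" "pdeg T \<le> 1" | "inP T" "2 \<le> pdeg T" by linarith
  then show ?case
  proof cases
    case 1
    then show ?thesis using f g by (simp add: is_exp_series_def)
  next
    case 2
    then have "pdeg T = 0 \<or> pdeg T = 1" by linarith
    then show ?thesis using f01 g01 2 pdeg_eq_0_iff pdeg_eq_1_iff by auto
  next
    case 3
    have "(\<Sum>ts\<in>proper_graft_tuples k T. \<Prod>i<k. f (ts!i)) = (\<Sum>ts\<in>proper_graft_tuples k T. \<Prod>i<k. g (ts!i))"
      using less inP_graft_tuples_nth by (intro sum.cong prod.cong refl) (auto simp: proper_graft_tuples_def)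
    then have "(of_nat k ^ pdeg T - of_nat k) * f T = (of_nat k ^ pdeg T - of_nat k) * g T"
      using f g 3 f01 g01 sum_graft_tuples_split[of T f k] sum_graft_tuples_split[of T g k]
      by (simp add: is_exp_series_def omega_coeff_replicate algebra_simps)
    then show ?thesis using of_nat_power_minus_self_neq_0[OF k 3(2)] by simp
  qed
qed

lemma exp_k_eq_exp_coeff: "2 \<le> k \<Longrightarrow> exp_k k = (\<lambda>T. of_real (exp_coeff k T))"
  unfolding exp_k_def using is_exp_series_exp_coeff is_exp_series_unique by blast

section \<open>Contraction\<close>

lemma contract_cong:
  "\<forall>J. (\<forall>x<tdeg t. x \<in> I \<longleftrightarrow> x \<in> J) \<longrightarrow> contract t I = contract t J"
  "\<forall>J. (\<forall>x<sum_list (map tdeg ts). x \<in> I \<longleftrightarrow> x \<in> J) \<longrightarrow> contract_list ts I = contract_list ts J"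
proof (induction t I and ts I rule: contract_contract_list.induct)
  case (2 ts I) then show ?case by (metis tdeg.simps(2) contract.simps(2))
next
  case (4 t ts I)
  show ?case
  proof (intro allI impI)
    fix J assume J: "\<forall>x<sum_list (map tdeg (t # ts)). x \<in> I \<longleftrightarrow> x \<in> J"
    have "contract t I = contract t J" using 4(1) J by simp
    moreover have "contract_list ts {i. i + tdeg t \<in> I} = contract_list ts {i. i + tdeg t \<in> J}"
      using 4(2)[rule_format, of "{i. i + tdeg t \<in> J}"] J by simp
    ultimately show "contract_list (t # ts) I = contract_list (t # ts) J" by simp
  qed
qed simp_all

lemma contract_restrict: "contract t (I \<inter> {..<tdeg t}) = contract t I"
  using contract_cong(1)[of t "I \<inter> {..<tdeg t}"] by auto

lemma inP_contract:
  "reduced t \<Longrightarrow> inP (contract t I)"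
  "list_all reduced ts \<Longrightarrow> list_all inP (contract_list ts I)"
proof (induction t I and ts I rule: contract_contract_list.induct)
  case (1 I) then show ?case by (simp add: inP_def)
next
  case (2 ts I) then show ?case by (simp add: inP_graft)
qed auto

lemma pdeg_contract:
  "pdeg (contract t I) = card (I \<inter> {..<tdeg t})"
  "sum_list (map pdeg (contract_list ts I)) = card (I \<inter> {..<sum_list (map tdeg ts)})"
proof (induction t I and ts I rule: contract_contract_list.induct)
  case (1 I) then show ?case by (auto simp: pdeg_def lessThan_Suc)
next
  case (2 ts I) then show ?case by (simp add: pdeg_graft)
qed (simp_all add: card_Int_lessThan_add)

lemma contract_all:
  "reduced t \<Longrightarrow> {..<tdeg t} \<subseteq> I \<Longrightarrow> contract t I = Some t"
  "list_all reduced ts \<Longrightarrow> {..<sum_list (map tdeg ts)} \<subseteq> I \<Longrightarrow> contract_list ts I = map Some ts"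
proof (induction t I and ts I rule: contract_contract_list.induct)
  case (2 ts I)
  then have "contract_list ts I = map Some ts" and "2 \<le> length ts" by simp_all
  then show ?case by (auto simp: graft_eq_case filter_map o_def split: list.split)
next
  case (4 t ts I)
  then have "{..<tdeg t} \<subseteq> I" and "{..<sum_list (map tdeg ts)} \<subseteq> {i. i + tdeg t \<in> I}" by auto
  with 4 show ?case by simp
qed auto

lemma inP_pcontract: "inP u \<Longrightarrow> inP (pcontract u I)"
  using inP_contract(1) by (cases u) (auto simp: pcontract_def, simp_all add: inP_def)

lemma pdeg_pcontract: "I \<subseteq> {..<pdeg u} \<Longrightarrow> pdeg (pcontract u I) = card I"
  using pdeg_contract(1) by (cases u) (auto simp: pcontract_def, simp_all add: pdeg_def Int_absorb2)

lemma pcontract_all: "inP u \<Longrightarrow> pcontract u {..<pdeg u} = u"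
  by (cases u) (auto simp: pcontract_def pdeg_def inP_def contract_all)

fun split_leaves :: "rtree option list \<Rightarrow> nat set \<Rightarrow> nat set list" where
  "split_leaves [] I = []"
| "split_leaves (u # us) I = (I \<inter> {..<pdeg u}) # split_leaves us {x. x + pdeg u \<in> I}"

fun join_leaves :: "(rtree option \<times> nat set) list \<Rightarrow> nat set" where
  "join_leaves [] = {}"
| "join_leaves ((u, J) # ps) = J \<union> (\<lambda>x. x + pdeg u) ` join_leaves ps"

lemma length_split_leaves [simp]: "length (split_leaves us I) = length us"
  by (induction us arbitrary: I) auto

lemma pcontract_graft:
  "pcontract (graft us) I = graft (map (case_prod pcontract) (zip us (split_leaves us I)))"
proof -
  let ?ts = "map the (filter (\<lambda>x. x \<noteq> None) us)"
  have "pcontract (graft us) I = graft (contract_list ?ts I)"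
    by (auto simp: graft_eq_case pcontract_def graft_single split: list.split)
  moreover have "filter (\<lambda>x. x \<noteq> None) (map (case_prod pcontract) (zip us (split_leaves us I)))
      = filter (\<lambda>x. x \<noteq> None) (contract_list ?ts I)"
  proof (induction us arbitrary: I)
    case (Cons u us)
    then show ?case
      by (cases u) (auto simp: pcontract_def pdeg_def contract_restrict)
  qed simp
  ultimately show ?thesis by (simp add: graft_def)
qed

lemma join_split_leaves:
  "join_leaves (zip us (split_leaves us I)) = I \<inter> {..<sum_list (map pdeg us)}"
proof (induction us arbitrary: I)
  case (Cons u us)
  then show ?case by (simp add: Int_lessThan_add_eq[of I "pdeg u"])
qed simp

lemma split_join_leaves:
  "\<forall>p\<in>set ps. snd p \<subseteq> {..<pdeg (fst p)} \<Longrightarrow> split_leaves (map fst ps) (join_leaves ps) = map snd ps"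
proof (induction ps)
  case (Cons p ps)
  obtain u J where p: "p = (u, J)" by fastforce
  have "J \<subseteq> {..<pdeg u}" using Cons.prems p by auto
  then have "(J \<union> (\<lambda>x. x + pdeg u) ` join_leaves ps) \<inter> {..<pdeg u} = J"
    and "{x. x + pdeg u \<in> J \<union> (\<lambda>x. x + pdeg u) ` join_leaves ps} = join_leaves ps"
    by auto
  with Cons p show ?case by simp
qed simp

lemma join_leaves_subset:
  "\<forall>p\<in>set ps. snd p \<subseteq> {..<pdeg (fst p)} \<Longrightarrow> join_leaves ps \<subseteq> {..<sum_list (map (pdeg \<circ> fst) ps)}"
proof (induction ps)
  case (Cons p ps)
  obtain u J where p: "p = (u, J)" by fastforce
  have J: "J \<subseteq> {..<pdeg u}" using Cons.prems p by auto
  have IH: "join_leaves ps \<subseteq> {..<sum_list (map (pdeg \<circ> fst) ps)}"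
    using Cons.prems by (intro Cons.IH) auto
  show ?case
  proof
    fix x assume "x \<in> join_leaves (p # ps)"
    then have "x \<in> J \<or> (\<exists>y\<in>join_leaves ps. x = y + pdeg u)" using p by auto
    then show "x \<in> {..<sum_list (map (pdeg \<circ> fst) (p # ps))}" using J IH p by auto
  qed
qed simp

lemma split_leaves_subset: "\<forall>p\<in>set (zip us (split_leaves us I)). snd p \<subseteq> {..<pdeg (fst p)}"
  by (induction us arbitrary: I) auto

section \<open>Expansion coefficients\<close>

definition weak_compositions :: "nat \<Rightarrow> nat \<Rightarrow> nat list set" where
  "weak_compositions k n = {ns. length ns = k \<and> sum_list ns = n}"

lemma finite_weak_compositions: "finite (weak_compositions k n)"
proof (rule finite_subset)
  show "weak_compositions k n \<subseteq> {ns. set ns \<subseteq> {..n} \<and> length ns = k}"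
    by (auto simp: weak_compositions_def member_le_sum_list)
qed (rule finite_lists_length_eq[OF finite_atMost])

lemma weak_compositions_Suc:
  "weak_compositions (Suc k) n = (\<lambda>(a, ns). a # ns) ` (SIGMA a:{..n}. weak_compositions k (n - a))"
proof
  show "weak_compositions (Suc k) n \<subseteq> (\<lambda>(a, ns). a # ns) ` (SIGMA a:{..n}. weak_compositions k (n - a))"
  proof
    fix xs assume xs: "xs \<in> weak_compositions (Suc k) n"
    then obtain y ys where "xs = y # ys" by (cases xs) (auto simp: weak_compositions_def)
    with xs show "xs \<in> (\<lambda>(a, ns). a # ns) ` (SIGMA a:{..n}. weak_compositions k (n - a))"
      by (force simp: weak_compositions_def)
  qed
qed (auto simp: weak_compositions_def)

lemma sum_weak_compositions_inverse_fact:
  "(\<Sum>ns\<in>weak_compositions k n. \<Prod>i<k. 1 / fact (ns!i) :: 'a::field_char_0) = of_nat k ^ n / fact n"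
proof (induction k arbitrary: n)
  case 0
  have "weak_compositions 0 n = (if n = 0 then {[]} else {})" by (auto simp: weak_compositions_def)
  then show ?case by simp
next
  case (Suc k)
  have inj: "inj_on (\<lambda>(a, ns). a # ns) (SIGMA a:{..n}. weak_compositions k (n - a))"
    by (auto simp: inj_on_def)
  have "(\<Sum>ns\<in>weak_compositions (Suc k) n. \<Prod>i<Suc k. 1 / fact (ns!i) :: 'a)
      = (\<Sum>(a, ns)\<in>(SIGMA a:{..n}. weak_compositions k (n - a)). \<Prod>i<Suc k. 1 / fact ((a # ns)!i))"
    unfolding weak_compositions_Suc by (subst sum.reindex[OF inj]) (simp add: case_prod_beta)
  also have "\<dots> = (\<Sum>a\<le>n. \<Sum>ns\<in>weak_compositions k (n - a). 1 / fact a * (\<Prod>i<k. 1 / fact (ns!i)))"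
    by (subst sum.Sigma[symmetric])
      (auto simp del: prod.lessThan_Suc simp: finite_weak_compositions prod.lessThan_Suc_shift)
  also have "\<dots> = (\<Sum>a\<le>n. 1 / fact a * (of_nat k ^ (n - a) / fact (n - a)))"
    by (simp only: Suc flip: sum_distrib_left)
  also have "\<dots> = (\<Sum>a\<le>n. of_nat (n choose a) * 1 ^ a * of_nat k ^ (n - a)) / fact n"
    by (simp add: sum_divide_distrib binomial_fact field_simps)
  also have "\<dots> = of_nat (Suc k) ^ n / fact n"
    by (simp add: binomial_ring add.commute)
  finally show ?case .
qed

definition contraction_pairs :: "nat \<Rightarrow> rtree option \<Rightarrow> (rtree option \<times> nat set) set" where
  "contraction_pairs N T =
     {p. inP (fst p) \<and> pdeg (fst p) = N \<and> snd p \<subseteq> {..<N} \<and> pcontract (fst p) (snd p) = T}"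

(* The coefficient of lam^n x^T in exp_k(lam + x). *)
definition expansion_coeff :: "nat \<Rightarrow> nat \<Rightarrow> rtree option \<Rightarrow> real" where
  "expansion_coeff k n T = (\<Sum>p\<in>contraction_pairs (pdeg T + n) T. exp_coeff k (fst p))"

definition grafted_contraction_pairs :: "nat \<Rightarrow> nat \<Rightarrow> rtree option \<Rightarrow> (rtree option list \<times> nat set) set" where
  "grafted_contraction_pairs k N T =
     {x. length (fst x) = k \<and> list_all inP (fst x) \<and> sum_list (map pdeg (fst x)) = N \<and>
         snd x \<subseteq> {..<N} \<and> pcontract (graft (fst x)) (snd x) = T}"

definition contraction_pair_tuples :: "nat \<Rightarrow> nat \<Rightarrow> rtree option \<Rightarrow> (rtree option \<times> nat set) list set" where
  "contraction_pair_tuples k N T =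
     {ps. length ps = k \<and> (\<forall>p\<in>set ps. inP (fst p) \<and> snd p \<subseteq> {..<pdeg (fst p)}) \<and>
          sum_list (map (pdeg \<circ> fst) ps) = N \<and> graft (map (case_prod pcontract) ps) = T}"

lemma finite_contraction_pairs: "finite (contraction_pairs N T)"
proof (rule finite_subset)
  show "contraction_pairs N T \<subseteq> {U. inP U \<and> pdeg U \<le> N} \<times> Pow {..<N}"
    by (auto simp: contraction_pairs_def)
qed (simp add: finite_inP_pdeg_le)

lemma contraction_pairsD:
  assumes "p \<in> contraction_pairs N T"
  shows "pdeg T = card (snd p)" and "card (snd p) \<le> N"
  using assms pdeg_pcontract[of "snd p" "fst p"] card_mono[of "{..<N}" "snd p"]
  by (auto simp: contraction_pairs_def)

lemma sum_contraction_pairs_graft: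
  assumes k: "2 \<le> k"
  shows "real k ^ N * (\<Sum>p\<in>contraction_pairs N T. exp_coeff k (fst p))
       = (\<Sum>x\<in>grafted_contraction_pairs k N T. \<Prod>i<k. exp_coeff k (fst x ! i))"
proof -
  have "real k ^ N * (\<Sum>p\<in>contraction_pairs N T. exp_coeff k (fst p))
      = (\<Sum>p\<in>contraction_pairs N T. \<Sum>us\<in>graft_tuples k (fst p). \<Prod>i<k. exp_coeff k (us!i))"
    unfolding sum_distrib_left
    by (intro sum.cong refl) (simp add: contraction_pairs_def exp_coeff_graft_identity[OF k])
  also have "\<dots> = (\<Sum>(p, us)\<in>Sigma (contraction_pairs N T) (\<lambda>p. graft_tuples k (fst p)). \<Prod>i<k. exp_coeff k (us!i))"
    by (rule sum.Sigma) (auto simp: finite_contraction_pairs finite_graft_tuples)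
  also have "\<dots> = (\<Sum>x\<in>grafted_contraction_pairs k N T. \<Prod>i<k. exp_coeff k (fst x ! i))"
    by (rule sum.reindex_bij_witness[where i = "\<lambda>x. ((graft (fst x), snd x), fst x)" and j = "\<lambda>(p, us). (us, snd p)"])
      (auto simp: contraction_pairs_def grafted_contraction_pairs_def graft_tuples_def inP_graft pdeg_graft)
  finally show ?thesis .
qed

lemma sum_grafted_contraction_pairs_eq:
  "(\<Sum>x\<in>grafted_contraction_pairs k N T. h (fst x)) = (\<Sum>ps\<in>contraction_pair_tuples k N T. h (map fst ps))"
proof (rule sum.reindex_bij_witness[where j = "\<lambda>x. zip (fst x) (split_leaves (fst x) (snd x))"
      and i = "\<lambda>ps. (map fst ps, join_leaves ps)"])
  fix x assume x: "x \<in> grafted_contraction_pairs k N T"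
  then show "(map fst (zip (fst x) (split_leaves (fst x) (snd x))), join_leaves (zip (fst x) (split_leaves (fst x) (snd x)))) = x"
    by (simp add: grafted_contraction_pairs_def join_split_leaves Int_absorb2)
  have "\<forall>p\<in>set (zip (fst x) (split_leaves (fst x) (snd x))). inP (fst p)"
    using x by (auto simp: grafted_contraction_pairs_def list_all_iff dest: set_zip_leftD)
  then show "zip (fst x) (split_leaves (fst x) (snd x)) \<in> contraction_pair_tuples k N T"
    using x split_leaves_subset[of "fst x" "snd x"]
    by (simp add: grafted_contraction_pairs_def contraction_pair_tuples_def pcontract_graft flip: map_map)
  show "h (map fst (zip (fst x) (split_leaves (fst x) (snd x)))) = h (fst x)" by simp
next
  fix ps assume ps: "ps \<in> contraction_pair_tuples k N T"
  then have sub: "\<forall>p\<in>set ps. snd p \<subseteq> {..<pdeg (fst p)}" by (simp add: contraction_pair_tuples_def)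
  then show "zip (fst (map fst ps, join_leaves ps)) (split_leaves (fst (map fst ps, join_leaves ps)) (snd (map fst ps, join_leaves ps))) = ps"
    by (simp add: split_join_leaves zip_map_fst_snd)
  show "(map fst ps, join_leaves ps) \<in> grafted_contraction_pairs k N T"
    using ps join_leaves_subset[OF sub]
    by (auto simp: contraction_pair_tuples_def grafted_contraction_pairs_def list_all_iff pcontract_graft
        split_join_leaves[OF sub] zip_map_fst_snd)
qed

lemma contraction_pair_tuples_decompose:
  assumes ps: "ps \<in> contraction_pair_tuples k (pdeg T + n) T"
  defines "ts \<equiv> map (case_prod pcontract) ps" and "ns \<equiv> map (\<lambda>p. pdeg (fst p) - card (snd p)) ps"
  shows "ts \<in> graft_tuples k T" and "ns \<in> weak_compositions k n"
    and "\<forall>i<k. ps!i \<in> contraction_pairs (pdeg (ts!i) + ns!i) (ts!i)"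
proof -
  have len: "length ps = k" and graft: "graft ts = T"
    and ps_set: "\<And>p. p \<in> set ps \<Longrightarrow> inP (fst p) \<and> snd p \<subseteq> {..<pdeg (fst p)}"
    using ps by (auto simp: contraction_pair_tuples_def ts_def)
  have card: "pdeg (case_prod pcontract p) = card (snd p)" and card_le: "card (snd p) \<le> pdeg (fst p)"
    if "p \<in> set ps" for p
    using ps_set[OF that] pdeg_pcontract card_mono[of "{..<pdeg (fst p)}" "snd p"]
    by (auto simp: case_prod_beta)
  show "ts \<in> graft_tuples k T"
    using len graft ps_set inP_pcontract by (auto simp: graft_tuples_def ts_def list_all_iff case_prod_beta)
  have "pdeg T + n = sum_list (map (\<lambda>p. (pdeg (fst p) - card (snd p)) + pdeg (case_prod pcontract p)) ps)"
    using ps card card_le by (simp add: contraction_pair_tuples_def cong: map_cong)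
  also have "\<dots> = sum_list ns + sum_list (map pdeg ts)"
    by (simp add: sum_list_addf ns_def ts_def o_def)
  also have "sum_list (map pdeg ts) = pdeg T"
    by (simp only: graft flip: pdeg_graft)
  finally show "ns \<in> weak_compositions k n"
    using len by (simp add: weak_compositions_def ns_def)
  show "\<forall>i<k. ps!i \<in> contraction_pairs (pdeg (ts!i) + ns!i) (ts!i)"
    using len card card_le ps_set by (auto simp: contraction_pairs_def ts_def ns_def case_prod_beta)
qed

lemma contraction_pair_tuples_compose:
  assumes ts: "ts \<in> graft_tuples k T" and ns: "ns \<in> weak_compositions k n" and len: "length ps = k"
    and ps: "\<forall>i<k. ps!i \<in> contraction_pairs (pdeg (ts!i) + ns!i) (ts!i)"
  shows "ps \<in> contraction_pair_tuples k (pdeg T + n) T"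
    and "map (case_prod pcontract) ps = ts" and "map (\<lambda>p. pdeg (fst p) - card (snd p)) ps = ns"
proof -
  have lts: "length ts = k" and lns: "length ns = k"
    using ts ns by (auto simp: graft_tuples_def weak_compositions_def)
  have card: "card (snd (ps!i)) = pdeg (ts!i)" if "i < k" for i
    using contraction_pairsD(1) ps that by metis
  show map_ts: "map (case_prod pcontract) ps = ts"
    using ps len lts by (intro nth_equalityI) (auto simp: contraction_pairs_def case_prod_beta)
  show "map (\<lambda>p. pdeg (fst p) - card (snd p)) ps = ns"
    using ps len lns card by (intro nth_equalityI) (auto simp: contraction_pairs_def)
  have "sum_list (map (pdeg \<circ> fst) ps) = (\<Sum>i<k. pdeg (ts!i) + ns!i)"
    using ps len by (simp add: sum_list_sum_nth atLeast0LessThan contraction_pairs_def)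
  also have "\<dots> = pdeg T + n"
    using ts ns lts lns sum_list_pdeg_graft_tuples[OF ts]
    by (simp add: sum.distrib sum_list_sum_nth atLeast0LessThan weak_compositions_def)
  moreover have "\<forall>p\<in>set ps. inP (fst p) \<and> snd p \<subseteq> {..<pdeg (fst p)}"
    unfolding all_set_conv_all_nth using ps len by (simp add: contraction_pairs_def)
  ultimately show "ps \<in> contraction_pair_tuples k (pdeg T + n) T"
    using len map_ts ts by (simp add: contraction_pair_tuples_def graft_tuples_def)
qed

lemma sum_contraction_pair_tuples_eq:
  fixes a :: "rtree option \<Rightarrow> 'a::comm_semiring_1"
  shows "(\<Sum>ps\<in>contraction_pair_tuples k (pdeg T + n) T. \<Prod>i<k. a (fst (ps!i)))
 = (\<Sum>ts\<in>graft_tuples k T. \<Sum>ns\<in>weak_compositions k n.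
      \<Prod>i<k. \<Sum>p\<in>contraction_pairs (pdeg (ts!i) + ns!i) (ts!i). a (fst p))"
proof -
  let ?L = "\<lambda>(ts, ns). {ps. length ps = k \<and> (\<forall>i<k. ps!i \<in> contraction_pairs (pdeg (ts!i) + ns!i) (ts!i))}"
  have "(\<Sum>ps\<in>contraction_pair_tuples k (pdeg T + n) T. \<Prod>i<k. a (fst (ps!i)))
      = (\<Sum>(y, ps)\<in>Sigma (graft_tuples k T \<times> weak_compositions k n) ?L. \<Prod>i<k. a (fst (ps!i)))"
    by (rule sum.reindex_bij_witness[where i = snd
          and j = "\<lambda>ps. ((map (case_prod pcontract) ps, map (\<lambda>p. pdeg (fst p) - card (snd p)) ps), ps)"])
      (auto simp: contraction_pair_tuples_decompose contraction_pair_tuples_compose,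
       auto simp: contraction_pair_tuples_def)
  also have "\<dots> = (\<Sum>y\<in>graft_tuples k T \<times> weak_compositions k n. \<Sum>ps\<in>?L y. \<Prod>i<k. a (fst (ps!i)))"
    by (rule sum.Sigma[symmetric])
      (auto simp: finite_graft_tuples finite_weak_compositions finite_contraction_pairs intro!: finite_lists_nth_in)
  also have "\<dots> = (\<Sum>(ts, ns)\<in>graft_tuples k T \<times> weak_compositions k n.
      \<Prod>i<k. \<Sum>p\<in>contraction_pairs (pdeg (ts!i) + ns!i) (ts!i). a (fst p))"
    by (intro sum.cong refl) (clarsimp simp: prod_sum_eq_sum_lists[where f = "\<lambda>_ p. a (fst p)"])
  also have "\<dots> = (\<Sum>ts\<in>graft_tuples k T. \<Sum>ns\<in>weak_compositions k n.
      \<Prod>i<k. \<Sum>p\<in>contraction_pairs (pdeg (ts!i) + ns!i) (ts!i). a (fst p))"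
    by (simp add: sum.cartesian_product)
  finally show ?thesis .
qed

lemma expansion_coeff_recursion:
  assumes k: "2 \<le> k"
  shows "real k ^ (pdeg T + n) * expansion_coeff k n T
       = (\<Sum>ts\<in>graft_tuples k T. \<Sum>ns\<in>weak_compositions k n. \<Prod>i<k. expansion_coeff k (ns!i) (ts!i))"
  unfolding expansion_coeff_def sum_contraction_pairs_graft[OF k]
  using sum_grafted_contraction_pairs_eq[of "\<lambda>us. \<Prod>i<k. exp_coeff k (us!i)"] sum_contraction_pair_tuples_eq
  by (simp add: contraction_pair_tuples_def)

lemma graft_tuples_compositions_dominant_entry:
  assumes ts: "ts \<in> graft_tuples k T" and ns: "ns \<in> weak_compositions k n" and i: "i < k"
    and dom: "pdeg T + n \<le> pdeg (ts!i) + ns!i"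
  shows "ts = (replicate k None)[i := T]" and "ns = (replicate k 0)[i := n]"
proof -
  have "ns!i \<le> n" using ns i elem_le_sum_list[of i ns] by (simp add: weak_compositions_def)
  moreover have "pdeg (ts!i) \<le> pdeg T" by (rule pdeg_graft_tuples_nth_le[OF ts i])
  ultimately have "ns!i = n" "pdeg (ts!i) = pdeg T" using dom by linarith+
  then show "ts = (replicate k None)[i := T]"
    using graft_tuples_dominant_entry[OF ts i] by simp
  show "ns = (replicate k 0)[i := n]"
    using sum_list_dominant_entry[of i ns] ns i \<open>ns!i = n\<close> by (simp add: weak_compositions_def)
qed

lemma sum_graft_tuples_compositions_split:
  fixes X :: "nat \<Rightarrow> rtree option \<Rightarrow> 'a::comm_semiring_1" and k :: nat
  assumes T: "inP T" and N: "1 \<le> pdeg T + n" and X0: "X 0 None = 1"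
  defines "diag \<equiv> (\<lambda>j. ((replicate k None)[j := T], (replicate k 0)[j := n])) ` {..<k}"
  shows "(\<Sum>ts\<in>graft_tuples k T. \<Sum>ns\<in>weak_compositions k n. \<Prod>i<k. X (ns!i) (ts!i))
       = (\<Sum>(ts, ns)\<in>graft_tuples k T \<times> weak_compositions k n - diag. \<Prod>i<k. X (ns!i) (ts!i))
         + of_nat k * X n T"
proof -
  let ?f = "\<lambda>j. ((replicate k None)[j := T], (replicate k (0::nat))[j := n])"
  have "T \<noteq> None \<or> n \<noteq> 0" using N by (auto simp: pdeg_def split: option.splits)
  then have inj: "inj_on ?f {..<k}"
    by (intro inj_onI) (metis Pair_inject lessThan_iff length_replicate nth_list_update_eq nth_list_update_neq nth_replicate)
  have diag_sub: "diag \<subseteq> graft_tuples k T \<times> weak_compositions k n"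
    using nones_upd_graft_tuples[OF T] by (auto simp: diag_def weak_compositions_def sum_list_update)
  have "(\<Sum>ts\<in>graft_tuples k T. \<Sum>ns\<in>weak_compositions k n. \<Prod>i<k. X (ns!i) (ts!i))
      = (\<Sum>(ts, ns)\<in>graft_tuples k T \<times> weak_compositions k n - diag. \<Prod>i<k. X (ns!i) (ts!i))
        + (\<Sum>(ts, ns)\<in>diag. \<Prod>i<k. X (ns!i) (ts!i))"
    unfolding sum.cartesian_product
    by (rule sum.subset_diff[OF diag_sub]) (simp add: finite_graft_tuples finite_weak_compositions)
  also have "(\<Sum>(ts, ns)\<in>diag. \<Prod>i<k. X (ns!i) (ts!i)) = (\<Sum>j<k. X n T)"
    unfolding diag_def sum.reindex[OF inj]
  proof (rule sum.cong[OF refl])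
    fix j assume "j \<in> {..<k}"
    then show "(case_prod (\<lambda>ts ns. \<Prod>i<k. X (ns!i) (ts!i)) \<circ> ?f) j = X n T"
      using X0 by (simp, subst prod_lessThan_single[of j]) auto
  qed
  finally show ?thesis by simp
qed

lemma expansion_recursion_unique:
  fixes X Y :: "nat \<Rightarrow> rtree option \<Rightarrow> 'a::field_char_0"
  assumes k: "2 \<le> k"
    and X: "\<And>n T. inP T \<Longrightarrow> of_nat k ^ (pdeg T + n) * X n T
              = (\<Sum>ts\<in>graft_tuples k T. \<Sum>ns\<in>weak_compositions k n. \<Prod>i<k. X (ns!i) (ts!i))"
    and Y: "\<And>n T. inP T \<Longrightarrow> of_nat k ^ (pdeg T + n) * Y n T
              = (\<Sum>ts\<in>graft_tuples k T. \<Sum>ns\<in>weak_compositions k n. \<Prod>i<k. Y (ns!i) (ts!i))"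
    and base0: "\<And>T. inP T \<Longrightarrow> X 0 T = Y 0 T" and X0: "X 0 None = 1"
    and base1: "X 1 None = Y 1 None"
  shows "inP T \<Longrightarrow> X n T = Y n T"
proof (induction "pdeg T + n" arbitrary: n T rule: less_induct)
  case less
  have Y0: "Y 0 None = 1" using base0[of None] X0 by (simp add: inP_def)
  consider "n = 0" | "n = 1" "T = None" | "2 \<le> pdeg T + n"
    using pdeg_eq_0_iff[OF less.prems] by linarith
  then show ?case
  proof cases
    case 3
    let ?S = "graft_tuples k T \<times> weak_compositions k n"
    define diag where "diag = (\<lambda>j. ((replicate k None)[j := T], (replicate k 0)[j := n])) ` {..<k}"
    have "(\<Prod>i<k. X (ns!i) (ts!i)) = (\<Prod>i<k. Y (ns!i) (ts!i))" if "(ts, ns) \<in> ?S - diag" for ts ns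
    proof (rule prod.cong[OF refl])
      fix i assume i: "i \<in> {..<k}"
      have "pdeg (ts!i) + ns!i < pdeg T + n"
        using that graft_tuples_compositions_dominant_entry[of ts k T ns n i] i
        by (force simp: diag_def)
      then show "X (ns!i) (ts!i) = Y (ns!i) (ts!i)"
        using less.hyps inP_graft_tuples_nth that i by auto
    qed
    then have "(\<Sum>(ts, ns)\<in>?S - diag. \<Prod>i<k. X (ns!i) (ts!i)) = (\<Sum>(ts, ns)\<in>?S - diag. \<Prod>i<k. Y (ns!i) (ts!i))"
      by (intro sum.cong refl) auto
    then have "(of_nat k ^ (pdeg T + n) - of_nat k) * X n T = (of_nat k ^ (pdeg T + n) - of_nat k) * Y n T"
      using X[OF less.prems, of n] Y[OF less.prems, of n] 3 X0 Y0
        sum_graft_tuples_compositions_split[OF less.prems, of n X k]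
        sum_graft_tuples_compositions_split[OF less.prems, of n Y k]
      by (simp add: diag_def algebra_simps)
    then show ?thesis using of_nat_power_minus_self_neq_0[OF k 3] by simp
  qed (use base0 base1 less.prems in auto)
qed

lemma expansion_coeff_0: assumes T: "inP T" shows "expansion_coeff k 0 T = exp_coeff k T"
proof -
  have "contraction_pairs (pdeg T) T = {(T, {..<pdeg T})}"
  proof
    show "contraction_pairs (pdeg T) T \<subseteq> {(T, {..<pdeg T})}"
    proof
      fix p assume p: "p \<in> contraction_pairs (pdeg T) T"
      then have sub: "snd p \<subseteq> {..<pdeg (fst p)}" and deg: "pdeg (fst p) = pdeg T"
        and inP: "inP (fst p)" and contr: "pcontract (fst p) (snd p) = T"
        by (auto simp: contraction_pairs_def)
      have all: "snd p = {..<pdeg (fst p)}"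
        using sub deg contraction_pairsD(1)[OF p] by (intro card_subset_eq) auto
      then have "fst p = T" using pcontract_all[OF inP] contr by simp
      then show "p \<in> {(T, {..<pdeg T})}" using all deg by (cases p) auto
    qed
  qed (use T pcontract_all[OF T] in \<open>simp add: contraction_pairs_def\<close>)
  then show ?thesis by (simp add: expansion_coeff_def)
qed

lemma expansion_coeff_1_None: "expansion_coeff k 1 None = 1"
proof -
  have "contraction_pairs 1 None = {(Some Lf, {})}"
  proof
    show "contraction_pairs 1 None \<subseteq> {(Some Lf, {})}"
    proof
      fix p assume p: "p \<in> contraction_pairs 1 None"
      then have "fst p = Some Lf" using pdeg_eq_1_iff by (auto simp: contraction_pairs_def)
      moreover have "snd p = {}"
        using p calculation by (auto simp: contraction_pairs_def pcontract_def split: if_splits)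
      ultimately show "p \<in> {(Some Lf, {})}" by (simp add: prod_eq_iff)
    qed
  qed (simp add: contraction_pairs_def pcontract_def inP_def pdeg_def)
  then show ?thesis by (simp add: expansion_coeff_def pdeg_def exp_coeff_Lf)
qed

lemma exp_coeff_div_fact_recursion:
  assumes k: "2 \<le> k" and T: "inP T"
  shows "real k ^ (pdeg T + n) * (exp_coeff k T / fact n)
       = (\<Sum>ts\<in>graft_tuples k T. \<Sum>ns\<in>weak_compositions k n. \<Prod>i<k. exp_coeff k (ts!i) / fact (ns!i))"
proof -
  have "(\<Sum>ts\<in>graft_tuples k T. \<Sum>ns\<in>weak_compositions k n. \<Prod>i<k. exp_coeff k (ts!i) / fact (ns!i))
      = (\<Sum>ts\<in>graft_tuples k T. (\<Prod>i<k. exp_coeff k (ts!i)) * (\<Sum>ns\<in>weak_compositions k n. \<Prod>i<k. 1 / fact (ns!i)))"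
    by (simp add: sum_distrib_left flip: prod.distrib)
  also have "\<dots> = (\<Sum>ts\<in>graft_tuples k T. \<Prod>i<k. exp_coeff k (ts!i)) * (real k ^ n / fact n)"
    by (simp only: sum_weak_compositions_inverse_fact sum_distrib_right)
  also have "\<dots> = real k ^ pdeg T * exp_coeff k T * (real k ^ n / fact n)"
    by (simp only: exp_coeff_graft_identity[OF k T])
  finally show ?thesis by (simp add: power_add)
qed

theorem expansion_coeff_eq:
  assumes k: "2 \<le> k" and T: "inP T"
  shows "expansion_coeff k n T = exp_coeff k T / fact n"
  using expansion_recursion_unique[where X = "expansion_coeff k" and Y = "\<lambda>n T. exp_coeff k T / fact n", OF k
      expansion_coeff_recursion[OF k] exp_coeff_div_fact_recursion[OF k] _ _ _ T]
    expansion_coeff_1_None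
  by (simp add: expansion_coeff_0 exp_coeff_None inP_def)

lemma sum_pdeg_eq_exp_coeff_pbinom:
  assumes k: "2 \<le> k" and T: "inP T"
  shows "(\<Sum>U | inP U \<and> pdeg U = N. exp_coeff k U * real (pbinom U T))
       = (if pdeg T \<le> N then exp_coeff k T / fact (N - pdeg T) else 0)"
proof -
  let ?S = "\<lambda>U. {I. I \<subseteq> {..<pdeg U} \<and> pcontract U I = T}"
  have Sigma: "Sigma {U. inP U \<and> pdeg U = N} ?S = contraction_pairs N T"
    by (auto simp: contraction_pairs_def)
  have "(\<Sum>U | inP U \<and> pdeg U = N. exp_coeff k U * real (pbinom U T))
      = (\<Sum>U | inP U \<and> pdeg U = N. \<Sum>I\<in>?S U. exp_coeff k U)"
    by (simp add: pbinom_def mult.commute)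
  also have "\<dots> = (\<Sum>p\<in>contraction_pairs N T. exp_coeff k (fst p))"
    unfolding Sigma[symmetric]
    by (subst sum.Sigma) (auto simp: finite_inP_pdeg_eq case_prod_beta intro: finite_subset[of _ "Pow _"])
  also have "\<dots> = (if pdeg T \<le> N then exp_coeff k T / fact (N - pdeg T) else 0)"
  proof (cases "pdeg T \<le> N")
    case True
    then show ?thesis
      using expansion_coeff_eq[OF k T, of "N - pdeg T"] by (simp add: expansion_coeff_def)
  next
    case False
    then have "contraction_pairs N T = {}" using contraction_pairsD by fastforce
    then show ?thesis using False by simp
  qed
  finally show ?thesis .
qed

theorem proposition4p2:
  fixes k :: nat and lam :: complex and T :: "rtree option"
  assumes "2 \<le> k" and "inP T"
  shows "((\<lambda>U. exp_k k U * of_nat (pbinom U T) * lam ^ (pdeg U - pdeg T))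
           has_sum (exp lam * exp_k k T)) {U. inP U}"
proof -
  note k = assms(1) and T = assms(2)
  let ?layer = "\<lambda>N. {U. inP U \<and> pdeg U = N}"
  let ?G = "\<lambda>z N. if pdeg T \<le> N then of_real (exp_coeff k T) / fact (N - pdeg T) * z ^ (N - pdeg T) else 0"
  have layer: "((\<lambda>U. of_real (exp_coeff k U * real (pbinom U T)) * z ^ (pdeg U - pdeg T)) has_sum ?G z N) (?layer N)"
    for z :: "'a::{real_normed_field,banach}" and N
    using arg_cong[OF sum_pdeg_eq_exp_coeff_pbinom[OF k T, of N], of "\<lambda>x. of_real x * z ^ (N - pdeg T)"]
    by (intro has_sum_finiteI) (auto simp: finite_inP_pdeg_eq sum_distrib_right)
  have "((\<lambda>U. exp_k k U * of_nat (pbinom U T) * lam ^ (pdeg U - pdeg T)) has_sum exp lam * exp_k k T) (\<Union>N. ?layer N)"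
  proof (rule has_sum_Union_disjoint_abs[where h = "?G (norm lam)"])
    show "((\<lambda>U. norm (exp_k k U * of_nat (pbinom U T) * lam ^ (pdeg U - pdeg T))) has_sum ?G (norm lam) N) (?layer N)" for N
      using layer[of "norm lam" N] exp_coeff_nonneg[OF k] by (simp add: exp_k_eq_exp_coeff[OF k] norm_mult norm_power)
    show "?G (norm lam) summable_on UNIV"
      using has_sum_exp_shifted by (rule has_sum_imp_summable)
  qed (use layer[of lam] has_sum_exp_shifted[of "pdeg T" "of_real (exp_coeff k T)" lam]
     in \<open>auto simp: exp_k_eq_exp_coeff[OF k] disjoint_family_on_def mult.commute\<close>)
  then show ?thesis by (simp add: Union_eq)
qed

end
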